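(* Let $\mathbf m=(m_k)_{k\in\mathbb N}$ be a sequence of positive reals with $\sum_k m_k=\infty$ and assume that the limit $A:=\lim_{t\to\infty}\ell_t/t\in[0,\infty]$ exists. Then: (a) if $\mathsf F_t\to\mathsf F_*$ in $L^1$ with $\mathsf F_*\neq\delta_0$, then $\mu_t\to\mu_*$ weakly, where $\mu_*$ is defined by $\int f\,d\mu_*=A\int m f(m)\,d\mathsf F_*(m)$; (b) if $\mu_t\to\mu_*$ in the $w^+$ sense with $\mu_*\neq\delta_\infty$, then $\mathsf F_t\to\mathsf F_*$ weakly, where $\mathsf F_*$ is defined by $\int f\,d\mathsf F_*=\frac1A\int\frac1m f(m)\,d\mu_*(m)$. Moreover, in both cases $A\in(0,\infty)$.
   Context: Set $M_0=0$, $M_n=\sum_{k=1}^n m_k$, and for $t>0$, $\ell_t=\inf\{\ell\in\mathbb N:M_\ell\ge t\}$, $\bar t=t-M_{\ell_t-1}$. Define measures on $\overline{\mathbb R}_+=[0,\infty]$ (the compact metric space with metric $d(x,y)=|\arctan x-\arctan y|$): the empirical mass measure $\mu_t=\frac{\bar t}{t}\delta_{\bar t}+\sum_{k=1}^{\ell_t-1}\frac{m_k}{t}\delta_{m_k}$ and the empirical mass frequency $\mathsf F_t=\frac{1}{\ell_t}\delta_{\bar t}+\sum_{k=1}^{\ell_t-1}\frac{1}{\ell_t}\delta_{m_k}$. Weak convergence $\lambda_t\to\lambda_*$ means $\int f\,d\lambda_t\to\int f\,d\lambda_*$ for all continuous $f$ on $[0,\infty]$. $\mathsf F_t\to\mathsf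 F_*$ in $L^1$ means $\mathsf F_*$ is a measure on $\mathbb R_+$ with $\mathsf F_t\to\mathsf F_*$ weakly and $\int m\,d\mathsf F_t(m)\to\int m\,d\mathsf F_*(m)<\infty$. $\mu_t\to\mu_*$ in the $w^+$ sense means $\mu_t\to\mu_*$ weakly and $\int\frac1m\,d\mu_t(m)\to\int\frac1m\,d\mu_*(m)<\infty$. (The paper also assumes in this proposition a family of random variables with $k$-independent means $v_m$ continuous on $[0,\infty]$, which plays no role in the conclusion.) *)

theory Defs
  imports "HOL-Probability.Probability"
begin

text \<open>The sequence m is indexed from 1 (m 0 is irrelevant).
  Measures on [0,\<infinity>] are Borel measures on the type ennreal (order topology,
  homeomorphic to [0,\<infinity>] with the arctan metric).\<close>

definition Mpart :: "(nat \<Rightarrow> real) \<Rightarrow> nat \<Rightarrow> real" where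
  "Mpart m n = (\<Sum>k=1..n. m k)"

definition ell :: "(nat \<Rightarrow> real) \<Rightarrow> real \<Rightarrow> nat" where
  "ell m t = (LEAST l. Mpart m l \<ge> t)"

definition tbar :: "(nat \<Rightarrow> real) \<Rightarrow> real \<Rightarrow> real" where
  "tbar m t = t - Mpart m (ell m t - 1)"

definition emp_mass :: "(nat \<Rightarrow> real) \<Rightarrow> real \<Rightarrow> ennreal measure" where
  "emp_mass m t = measure_of UNIV (sets borel)
     (\<lambda>A. ennreal (tbar m t / t) * indicator A (ennreal (tbar m t))
        + (\<Sum>k\<in>{1..<ell m t}. ennreal (m k / t) * indicator A (ennreal (m k))))"

definition emp_freq :: "(nat \<Rightarrow> real) \<Rightarrow> real \<Rightarrow> ennreal measure" where
  "emp_freq m t = measure_of UNIV (sets borel)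
     (\<lambda>A. ennreal (1 / real (ell m t)) * indicator A (ennreal (tbar m t))
        + (\<Sum>k\<in>{1..<ell m t}. ennreal (1 / real (ell m t)) * indicator A (ennreal (m k))))"

definition weak_conv_inf :: "(real \<Rightarrow> ennreal measure) \<Rightarrow> ennreal measure \<Rightarrow> bool" where
  "weak_conv_inf lam L \<longleftrightarrow>
     (\<forall>f :: ennreal \<Rightarrow> real. continuous_on UNIV f \<longrightarrow>
        ((\<lambda>t. integral\<^sup>L (lam t) f) \<longlongrightarrow> integral\<^sup>L L f) at_top)"

text \<open>F_t \<rightarrow> F_* in L^1: F_* lives on [0,\<infinity>), weak convergence, and convergence of first moments (finite limit).\<close>
definition L1_conv :: "(real \<Rightarrow> ennreal measure) \<Rightarrow> ennreal measure \<Rightarrow> bool" where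
  "L1_conv lam L \<longleftrightarrow> emeasure L {top} = 0 \<and> weak_conv_inf lam L \<and>
     ((\<lambda>t. \<integral>\<^sup>+ x. x \<partial>(lam t)) \<longlongrightarrow> (\<integral>\<^sup>+ x. x \<partial>L)) at_top \<and>
     (\<integral>\<^sup>+ x. x \<partial>L) < \<infinity>"

text \<open>w+ convergence: weak convergence plus convergence of \<integral> 1/m (finite limit); 1/0 = \<infinity>.\<close>
definition wplus_conv :: "(real \<Rightarrow> ennreal measure) \<Rightarrow> ennreal measure \<Rightarrow> bool" where
  "wplus_conv lam L \<longleftrightarrow> weak_conv_inf lam L \<and>
     ((\<lambda>t. \<integral>\<^sup>+ x. inverse x \<partial>(lam t)) \<longlongrightarrow> (\<integral>\<^sup>+ x. inverse x \<partial>L)) at_top \<and>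
     (\<integral>\<^sup>+ x. inverse x \<partial>L) < \<infinity>"

end

theory Submission
  imports Defs
begin

(* Both empirical measures are finite sums of Dirac masses at the same atoms, namely the pieces
   m 1, ..., m (ell t - 1) and tbar t into which [0, t] is cut; only the weights differ (piece / t
   versus 1 / ell t). Hence each is a density of the other,
     mu_t(dx) = (ell t / t) x F_t(dx)   and   F_t(dx) = (t / ell t) x^-1 mu_t(dx),
   and the relevant moments are explicit: int x dF_t = t / ell t and int x^-1 dmu_t = ell t / t.
   The moment convergence assumed in (a), resp. (b), therefore identifies A as 1 / int x dF_*,
   resp. int x^-1 dmu_*. The limit is a probability measure, and the excluded Dirac measures are
   exactly those for which this moment vanishes, which gives 0 < A < infinity.
   Weak convergence is then carried through the density: if L_t -> M weakly and int g dL_t ->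
   int g dM < infinity for a continuous g >= 0, then int f g dL_t -> int f g dM for every
   continuous f. Truncating g at height K gives a bounded continuous test function, and the
   truncation error is at most sup |f| (int g - int min(g, K)), uniformly small for large K and t. *)

lemma measure_eq_return_if_AE:
  assumes "prob_space N" "sets N = sets M" "a \<in> space M" "AE x in N. x = a"
  shows "N = return M a"
proof (rule measure_eqI)
  fix A assume A: "A \<in> sets N"
  have "emeasure N A = (\<integral>\<^sup>+x. indicator A x \<partial>N)"
    using A by simp
  also have "\<dots> = (\<integral>\<^sup>+x. indicator A a \<partial>N)"
    using assms(4) by (intro nn_integral_cong_AE) auto
  also have "\<dots> = indicator A a"
    using prob_space.emeasure_space_1[OF assms(1)] by simp
  finally show "emeasure N A = emeasure (return M a) A"
    using A assms(2) by simp
qed (simp add: assms(2))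

lemma nn_integral_nonzero_if_not_return:
  fixes g :: "'a::topological_space \<Rightarrow> ennreal"
  assumes "prob_space N" "sets N = sets borel" "g \<in> borel_measurable borel"
    and "\<And>x. g x = 0 \<longleftrightarrow> x = a" "N \<noteq> return borel a"
  shows "(\<integral>\<^sup>+x. g x \<partial>N) \<noteq> 0"
proof
  assume "(\<integral>\<^sup>+x. g x \<partial>N) = 0"
  then have "AE x in N. g x = 0"
    using assms(2,3) by (simp add: nn_integral_0_iff_AE measurable_cong_sets[OF assms(2) refl])
  then have "AE x in N. x = a"
    by (simp add: assms(4))
  then show False
    using measure_eq_return_if_AE[OF assms(1,2)] assms(5) by simp
qed

lemma prob_space_weak_limit:
  assumes "\<forall>\<^sub>F t in at_top. prob_space (L t)" "weak_conv_inf L N" "finite_measure N"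
  shows "prob_space N"
proof -
  have "\<forall>\<^sub>F t in at_top. integral\<^sup>L (L t) (\<lambda>_. 1::real) = 1"
    using assms(1) by eventually_elim (simp add: prob_space.prob_space)
  then have "((\<lambda>t. integral\<^sup>L (L t) (\<lambda>_. 1::real)) \<longlongrightarrow> 1) at_top"
    by (rule tendsto_eventually)
  moreover have "((\<lambda>t. integral\<^sup>L (L t) (\<lambda>_. 1::real)) \<longlongrightarrow> integral\<^sup>L N (\<lambda>_. 1)) at_top"
    using assms(2) continuous_on_const unfolding weak_conv_inf_def by blast
  ultimately have "integral\<^sup>L N (\<lambda>_. 1::real) = 1"
    by (intro tendsto_unique[of at_top]) simp_all
  then have "measure N (space N) = 1" by simp
  then show ?thesis
    using finite_measure.emeasure_eq_measure[OF assms(3)] by (intro prob_spaceI) simp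
qed

lemma integral_density_scaled:
  fixes f :: "'a \<Rightarrow> real"
  assumes f: "f \<in> borel_measurable M" and g: "g \<in> borel_measurable M"
    and g_fin: "AE x in M. g x \<noteq> \<infinity>" and "0 \<le> c"
  shows "integral\<^sup>L (density M (\<lambda>x. ennreal c * g x)) f = c * integral\<^sup>L M (\<lambda>x. f x * enn2real (g x))"
proof -
  have "density M (\<lambda>x. ennreal c * g x) = density M (\<lambda>x. ennreal (c * enn2real (g x)))"
    using g_fin g \<open>0 \<le> c\<close>
    by (intro density_cong) (auto simp: ennreal_mult less_top ennreal_enn2real elim!: eventually_mono)
  also have "integral\<^sup>L \<dots> f = integral\<^sup>L M (\<lambda>x. c * (f x * enn2real (g x)))"
    using f g \<open>0 \<le> c\<close> by (subst integral_density) (auto simp: ac_simps)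
  finally show ?thesis by simp
qed

lemma tendsto_of_approximations:
  fixes x :: "'a \<Rightarrow> real"
  assumes "\<And>e. 0 < e \<Longrightarrow> \<exists>a A. (a \<longlongrightarrow> A) F \<and> (\<forall>\<^sub>F t in F. \<bar>x t - a t\<bar> < e) \<and> \<bar>A - X\<bar> < e"
  shows "(x \<longlongrightarrow> X) F"
proof (rule tendstoI)
  fix e :: real assume "0 < e"
  then obtain a A where a: "(a \<longlongrightarrow> A) F" and close: "\<forall>\<^sub>F t in F. \<bar>x t - a t\<bar> < e / 3"
    and "\<bar>A - X\<bar> < e / 3"
    using assms[of "e / 3"] by auto
  have "\<forall>\<^sub>F t in F. dist (a t) A < e / 3"
    using tendstoD[OF a, of "e / 3"] \<open>0 < e\<close> by simp
  with close show "\<forall>\<^sub>F t in F. dist (x t) X < e"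
  proof eventually_elim
    case (elim t)
    then show ?case
      using \<open>\<bar>A - X\<bar> < e / 3\<close> unfolding dist_real_def by arith
  qed
qed

lemma measurable_continuous_on_sets_borel:
  "sets N = sets borel \<Longrightarrow> continuous_on UNIV h \<Longrightarrow> h \<in> borel_measurable N"
  using borel_measurable_continuous_onI measurable_cong_sets by blast

section \<open>Weak convergence tested against unbounded functions\<close>

(* The minimum is taken in ennreal, so that the truncation is continuous at infinity as well. *)
definition truncate_ennreal :: "real \<Rightarrow> ennreal \<Rightarrow> real" where
  "truncate_ennreal K y = enn2real (min y (ennreal K))"

lemma continuous_on_truncate_ennreal: "continuous_on UNIV (truncate_ennreal K)"
  unfolding continuous_on_eq_continuous_at[OF open_UNIV] isCont_def truncate_ennreal_def
proof (intro ballI tendsto_enn2real)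
  fix y :: ennreal
  have "min y (ennreal K) < top"
    by (simp add: min_less_iff_disj)
  then show "((\<lambda>z. min z (ennreal K)) \<longlongrightarrow> ennreal (enn2real (min y (ennreal K)))) (at y)"
    by (simp add: tendsto_min tendsto_ident_at)
qed simp

lemma truncate_ennreal_nonneg: "0 \<le> truncate_ennreal K y"
  by (simp add: truncate_ennreal_def)

lemma truncate_ennreal_le_enn2real: "y \<noteq> \<infinity> \<Longrightarrow> truncate_ennreal K y \<le> enn2real y"
  unfolding truncate_ennreal_def by (intro enn2real_mono) (auto simp: less_top)

lemma truncate_ennreal_eventually_eq:
  assumes "y \<noteq> \<infinity>"
  shows "\<forall>\<^sub>F n in sequentially. truncate_ennreal (real n) y = enn2real y"
proof -
  obtain n :: nat where "enn2real y \<le> real n"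
    using real_arch_simple by blast
  have "y \<le> ennreal (real k)" if "n \<le> k" for k
  proof -
    have "y = ennreal (enn2real y)"
      using assms by (simp add: less_top)
    also have "\<dots> \<le> ennreal (real k)"
      using \<open>enn2real y \<le> real n\<close> that by (intro ennreal_leI) simp
    finally show ?thesis .
  qed
  then show ?thesis
    unfolding eventually_sequentially truncate_ennreal_def
    by (intro exI[of _ n] allI impI) (simp add: min_absorb1)
qed

lemma integrable_bounded_mult:
  fixes f u :: "'a \<Rightarrow> real"
  assumes "integrable M u" "f \<in> borel_measurable M" "\<And>x. \<bar>f x\<bar> \<le> B"
  shows "integrable M (\<lambda>x. f x * u x)"
  using integrable_mult_right[OF integrable_abs[OF assms(1)], of B]
proof (rule Bochner_Integration.integrable_bound)
  show "(\<lambda>x. f x * u x) \<in> borel_measurable M"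
    using assms(1,2) by measurable
  have "\<bar>f x\<bar> * \<bar>u x\<bar> \<le> B * \<bar>u x\<bar>" for x
    using assms(3) by (intro mult_right_mono) auto
  moreover have "0 \<le> B"
    using assms(3) by (meson abs_ge_zero order.trans)
  ultimately show "AE x in M. norm (f x * u x) \<le> norm (B * \<bar>u x\<bar>)"
    by (simp add: abs_mult)
qed

definition truncation_gap :: "'a measure \<Rightarrow> ('a \<Rightarrow> ennreal) \<Rightarrow> real \<Rightarrow> real" where
  "truncation_gap N g K =
    integral\<^sup>L N (\<lambda>x. enn2real (g x)) - integral\<^sup>L N (\<lambda>x. truncate_ennreal K (g x))"

context
  fixes N :: "'a measure" and g :: "'a \<Rightarrow> ennreal"
  assumes g: "g \<in> borel_measurable N" and g_fin: "(\<integral>\<^sup>+x. g x \<partial>N) < \<infinity>"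
begin

lemma AE_finite: "AE x in N. g x \<noteq> \<infinity>"
  using nn_integral_PInf_AE[OF g] g_fin by simp

lemma integrable_enn2real: "integrable N (\<lambda>x. enn2real (g x))"
proof (rule integrableI_nonneg)
  have "(\<integral>\<^sup>+x. ennreal (enn2real (g x)) \<partial>N) \<le> (\<integral>\<^sup>+x. g x \<partial>N)"
    by (intro nn_integral_mono) (simp add: ennreal_enn2real_if)
  then show "(\<integral>\<^sup>+x. ennreal (enn2real (g x)) \<partial>N) < \<infinity>"
    using g_fin by (rule le_less_trans)
qed (use g in auto)

lemma integral_enn2real: "integral\<^sup>L N (\<lambda>x. enn2real (g x)) = enn2real (\<integral>\<^sup>+x. g x \<partial>N)"
proof -
  have "(\<integral>\<^sup>+x. ennreal (enn2real (g x)) \<partial>N) = (\<integral>\<^sup>+x. g x \<partial>N)"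
    using AE_finite by (intro nn_integral_cong_AE) (auto simp: less_top elim!: eventually_mono)
  then show ?thesis
    using g by (simp add: integral_eq_nn_integral)
qed

lemma borel_measurable_truncate_ennreal: "(\<lambda>x. truncate_ennreal K (g x)) \<in> borel_measurable N"
  using borel_measurable_continuous_onI[OF continuous_on_truncate_ennreal] g by measurable

lemma integrable_truncate_ennreal: "integrable N (\<lambda>x. truncate_ennreal K (g x))"
  using AE_finite
  by (intro Bochner_Integration.integrable_bound[OF integrable_enn2real borel_measurable_truncate_ennreal])
    (auto simp: truncate_ennreal_nonneg truncate_ennreal_le_enn2real elim!: eventually_mono)

lemma truncation_gap_tendsto_0: "(\<lambda>n. truncation_gap N g (real n)) \<longlonglongrightarrow> 0"
proof -
  have "(\<lambda>n. integral\<^sup>L N (\<lambda>x. truncate_ennreal (real n) (g x))) \<longlonglongrightarrow> integral\<^sup>L N (\<lambda>x. enn2real (g x))"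
  proof (rule integral_dominated_convergence[OF _ borel_measurable_truncate_ennreal integrable_enn2real])
    show "(\<lambda>x. enn2real (g x)) \<in> borel_measurable N"
      using g by measurable
    show "AE x in N. (\<lambda>n. truncate_ennreal (real n) (g x)) \<longlonglongrightarrow> enn2real (g x)"
      using AE_finite
      by eventually_elim (rule tendsto_eventually[OF truncate_ennreal_eventually_eq])
    show "AE x in N. norm (truncate_ennreal (real n) (g x)) \<le> enn2real (g x)" for n
      using AE_finite
      by eventually_elim (simp add: truncate_ennreal_nonneg truncate_ennreal_le_enn2real)
  qed
  from tendsto_diff[OF tendsto_const this, of "integral\<^sup>L N (\<lambda>x. enn2real (g x))"] show ?thesis
    unfolding truncation_gap_def by simp
qed

lemma truncation_error_le:
  fixes f :: "'a \<Rightarrow> real"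
  assumes f: "f \<in> borel_measurable N" "\<And>x. \<bar>f x\<bar> \<le> B"
  shows "\<bar>integral\<^sup>L N (\<lambda>x. f x * enn2real (g x)) - integral\<^sup>L N (\<lambda>x. f x * truncate_ennreal K (g x))\<bar>
    \<le> B * truncation_gap N g K"
proof -
  let ?d = "\<lambda>x. enn2real (g x) - truncate_ennreal K (g x)"
  have int_d: "integrable N ?d"
    by (intro Bochner_Integration.integrable_diff integrable_enn2real integrable_truncate_ennreal)
  have "\<bar>integral\<^sup>L N (\<lambda>x. f x * enn2real (g x)) - integral\<^sup>L N (\<lambda>x. f x * truncate_ennreal K (g x))\<bar>
      = \<bar>integral\<^sup>L N (\<lambda>x. f x * ?d x)\<bar>"
    using integrable_bounded_mult[OF integrable_enn2real f]
      integrable_bounded_mult[OF integrable_truncate_ennreal f]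
    by (simp add: right_diff_distrib)
  also have "\<dots> \<le> integral\<^sup>L N (\<lambda>x. \<bar>f x * ?d x\<bar>)"
    using integral_norm_bound[of N "\<lambda>x. f x * ?d x"] by simp
  also have "\<dots> \<le> integral\<^sup>L N (\<lambda>x. B * ?d x)"
  proof (rule integral_mono_AE)
    show "integrable N (\<lambda>x. \<bar>f x * ?d x\<bar>)"
      using integrable_bounded_mult[OF int_d f] by (rule integrable_abs)
    show "integrable N (\<lambda>x. B * ?d x)"
      using int_d by simp
    show "AE x in N. \<bar>f x * ?d x\<bar> \<le> B * ?d x"
      using AE_finite
    proof eventually_elim
      case (elim x)
      then have "0 \<le> ?d x"
        by (simp add: truncate_ennreal_le_enn2real)
      then show ?case
        using f(2)[of x] by (simp add: abs_mult mult_right_mono)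
    qed
  qed
  also have "\<dots> = B * truncation_gap N g K"
    using integrable_enn2real integrable_truncate_ennreal by (simp add: truncation_gap_def)
  finally show ?thesis .
qed

end

lemma integral_enn2real_tendsto:
  assumes lim: "((\<lambda>t. \<integral>\<^sup>+x. g x \<partial>L t) \<longlongrightarrow> (\<integral>\<^sup>+x. g x \<partial>M)) F"
    and fin: "(\<integral>\<^sup>+x. g x \<partial>M) < \<infinity>"
    and meas: "g \<in> borel_measurable M" "\<forall>\<^sub>F t in F. g \<in> borel_measurable (L t)"
  shows "((\<lambda>t. integral\<^sup>L (L t) (\<lambda>x. enn2real (g x))) \<longlongrightarrow> integral\<^sup>L M (\<lambda>x. enn2real (g x))) F"
proof -
  have "((\<lambda>t. enn2real (\<integral>\<^sup>+x. g x \<partial>L t)) \<longlongrightarrow> enn2real (\<integral>\<^sup>+x. g x \<partial>M)) F"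
    using lim fin by (intro tendsto_enn2real) (simp_all add: less_top)
  moreover have "\<forall>\<^sub>F t in F. enn2real (\<integral>\<^sup>+x. g x \<partial>L t) = integral\<^sup>L (L t) (\<lambda>x. enn2real (g x))"
    using meas(2) order_tendstoD(2)[OF lim fin] by eventually_elim (simp add: integral_enn2real)
  ultimately show ?thesis
    using integral_enn2real[OF meas(1) fin] by (simp add: Lim_transform_eventually)
qed

lemma truncation_gap_tendsto:
  fixes g :: "ennreal \<Rightarrow> ennreal"
  assumes sets_L: "\<forall>\<^sub>F t in at_top. sets (L t) = sets borel" and sets_M: "sets M = sets borel"
    and weak: "weak_conv_inf L M"
    and g: "continuous_on UNIV g"
    and g_lim: "((\<lambda>t. \<integral>\<^sup>+x. g x \<partial>L t) \<longlongrightarrow> (\<integral>\<^sup>+x. g x \<partial>M)) at_top"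
    and g_fin: "(\<integral>\<^sup>+x. g x \<partial>M) < \<infinity>"
  shows "((\<lambda>t. truncation_gap (L t) g K) \<longlongrightarrow> truncation_gap M g K) at_top"
  unfolding truncation_gap_def
proof (rule tendsto_diff)
  show "((\<lambda>t. integral\<^sup>L (L t) (\<lambda>x. enn2real (g x))) \<longlongrightarrow> integral\<^sup>L M (\<lambda>x. enn2real (g x))) at_top"
    using sets_L g
    by (intro integral_enn2real_tendsto[OF g_lim g_fin measurable_continuous_on_sets_borel[OF sets_M g]])
      (auto intro: measurable_continuous_on_sets_borel elim: eventually_mono)
  have "continuous_on UNIV (\<lambda>x. truncate_ennreal K (g x))"
    using continuous_on_compose2[OF continuous_on_truncate_ennreal g] by simp
  then show "((\<lambda>t. integral\<^sup>L (L t) (\<lambda>x. truncate_ennreal K (g x)))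
      \<longlongrightarrow> integral\<^sup>L M (\<lambda>x. truncate_ennreal K (g x))) at_top"
    using weak unfolding weak_conv_inf_def by blast
qed

lemma weak_conv_inf_integral_mult:
  fixes g :: "ennreal \<Rightarrow> ennreal" and f :: "ennreal \<Rightarrow> real"
  assumes sets_L: "\<forall>\<^sub>F t in at_top. sets (L t) = sets borel" and sets_M: "sets M = sets borel"
    and weak: "weak_conv_inf L M"
    and g: "continuous_on UNIV g"
    and g_lim: "((\<lambda>t. \<integral>\<^sup>+x. g x \<partial>L t) \<longlongrightarrow> (\<integral>\<^sup>+x. g x \<partial>M)) at_top"
    and g_fin: "(\<integral>\<^sup>+x. g x \<partial>M) < \<infinity>"
    and f: "continuous_on UNIV f"
  shows "((\<lambda>t. integral\<^sup>L (L t) (\<lambda>x. f x * enn2real (g x)))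
    \<longlongrightarrow> integral\<^sup>L M (\<lambda>x. f x * enn2real (g x))) at_top"
proof (rule tendsto_of_approximations)
  fix e :: real assume "0 < e"
  obtain B where B: "\<And>x. \<bar>f x\<bar> \<le> B"
    using compact_imp_bounded[OF compact_continuous_image[OF f compact_UNIV]] unfolding bounded_real by auto
  note meas = measurable_continuous_on_sets_borel
  have error: "\<bar>integral\<^sup>L N (\<lambda>x. f x * enn2real (g x)) - integral\<^sup>L N (\<lambda>x. f x * truncate_ennreal K (g x))\<bar>
      \<le> B * truncation_gap N g K" if "sets N = sets borel" "(\<integral>\<^sup>+x. g x \<partial>N) < \<infinity>" for N K
    using that meas[OF that(1) f] meas[OF that(1) g] B by (intro truncation_error_le) auto
  obtain K :: nat where K: "B * truncation_gap M g (real K) < e"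
    using order_tendstoD(2)[OF tendsto_mult_right_zero[OF truncation_gap_tendsto_0[OF meas[OF sets_M g] g_fin]]
        \<open>0 < e\<close>]
    by (auto simp: eventually_sequentially mult.commute)
  have "\<forall>\<^sub>F t in at_top. B * truncation_gap (L t) g (real K) < e"
    using truncation_gap_tendsto[OF sets_L sets_M weak g g_lim g_fin]
    by (rule order_tendstoD(2)[OF tendsto_mult_left K])
  with sets_L order_tendstoD(2)[OF g_lim g_fin]
  have "\<forall>\<^sub>F t in at_top. \<bar>integral\<^sup>L (L t) (\<lambda>x. f x * enn2real (g x))
      - integral\<^sup>L (L t) (\<lambda>x. f x * truncate_ennreal (real K) (g x))\<bar> < e"
    by eventually_elim (use error in \<open>blast intro: le_less_trans\<close>)
  moreover have "\<bar>integral\<^sup>L M (\<lambda>x. f x * truncate_ennreal (real K) (g x))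
      - integral\<^sup>L M (\<lambda>x. f x * enn2real (g x))\<bar> < e"
    using error[OF sets_M g_fin, of "real K"] K by (simp add: abs_minus_commute)
  moreover have "((\<lambda>t. integral\<^sup>L (L t) (\<lambda>x. f x * truncate_ennreal (real K) (g x)))
      \<longlongrightarrow> integral\<^sup>L M (\<lambda>x. f x * truncate_ennreal (real K) (g x))) at_top"
    using weak continuous_on_mult[OF f continuous_on_compose2[OF continuous_on_truncate_ennreal g]]
    unfolding weak_conv_inf_def by simp
  ultimately show "\<exists>a A. (a \<longlongrightarrow> A) at_top
      \<and> (\<forall>\<^sub>F t in at_top. \<bar>integral\<^sup>L (L t) (\<lambda>x. f x * enn2real (g x)) - a t\<bar> < e)
      \<and> \<bar>A - integral\<^sup>L M (\<lambda>x. f x * enn2real (g x))\<bar> < e"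
    by blast
qed

lemma weak_conv_inf_density:
  fixes g :: "ennreal \<Rightarrow> ennreal" and r :: "real \<Rightarrow> real"
  assumes sets_L: "\<forall>\<^sub>F t in at_top. sets (L t) = sets borel" and sets_M: "sets M = sets borel"
    and weak: "weak_conv_inf L M"
    and g: "continuous_on UNIV g"
    and g_lim: "((\<lambda>t. \<integral>\<^sup>+x. g x \<partial>L t) \<longlongrightarrow> (\<integral>\<^sup>+x. g x \<partial>M)) at_top"
    and g_fin: "(\<integral>\<^sup>+x. g x \<partial>M) < \<infinity>"
    and r: "(r \<longlongrightarrow> c) at_top"
    and r_nonneg: "\<forall>\<^sub>F t in at_top. 0 \<le> r t"
    and K: "\<forall>\<^sub>F t in at_top. K t = density (L t) (\<lambda>x. ennreal (r t) * g x)"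
  shows "weak_conv_inf K (density M (\<lambda>x. ennreal c * g x))"
  unfolding weak_conv_inf_def
proof (intro allI impI)
  fix f :: "ennreal \<Rightarrow> real" assume f: "continuous_on UNIV f"
  note meas = measurable_continuous_on_sets_borel
  have g_meas: "g \<in> borel_measurable N" if "sets N = sets borel" for N
    using meas[OF that g] .
  have "0 \<le> c"
    using r_nonneg by (intro tendsto_lowerbound[OF r]) auto
  have eq: "\<forall>\<^sub>F t in at_top. r t * integral\<^sup>L (L t) (\<lambda>x. f x * enn2real (g x)) = integral\<^sup>L (K t) f"
    using r_nonneg K sets_L order_tendstoD(2)[OF g_lim g_fin]
  proof eventually_elim
    case (elim t)
    then show ?case
      unfolding elim(2)
      by (intro integral_density_scaled[symmetric] meas f g_meas nn_integral_PInf_AE) simp_all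
  qed
  have lim: "((\<lambda>t. r t * integral\<^sup>L (L t) (\<lambda>x. f x * enn2real (g x)))
      \<longlongrightarrow> c * integral\<^sup>L M (\<lambda>x. f x * enn2real (g x))) at_top"
    by (intro tendsto_mult r weak_conv_inf_integral_mult[OF sets_L sets_M weak g g_lim g_fin f])
  have density: "integral\<^sup>L (density M (\<lambda>x. ennreal c * g x)) f = c * integral\<^sup>L M (\<lambda>x. f x * enn2real (g x))"
    using g_fin \<open>0 \<le> c\<close> sets_M by (intro integral_density_scaled meas f g_meas nn_integral_PInf_AE) simp_all
  show "((\<lambda>t. integral\<^sup>L (K t) f) \<longlongrightarrow> integral\<^sup>L (density M (\<lambda>x. ennreal c * g x)) f) at_top"
    unfolding density by (rule Lim_transform_eventually[OF lim eq])
qed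

section \<open>Finite sums of Dirac masses\<close>

definition dirac_sum :: "'i set \<Rightarrow> ('i \<Rightarrow> real) \<Rightarrow> ('i \<Rightarrow> real) \<Rightarrow> ennreal measure" where
  "dirac_sum I w q = distr (point_measure I (\<lambda>i. ennreal (w i))) borel (\<lambda>i. ennreal (q i))"

lemma sets_dirac_sum [simp, measurable_cong]: "sets (dirac_sum I w q) = sets borel"
  and space_dirac_sum [simp]: "space (dirac_sum I w q) = UNIV"
  by (simp_all add: dirac_sum_def)

lemma nn_integral_dirac_sum:
  assumes "finite I" "g \<in> borel_measurable borel"
  shows "(\<integral>\<^sup>+x. g x \<partial>dirac_sum I w q) = (\<Sum>i\<in>I. ennreal (w i) * g (ennreal (q i)))"
  using assms by (simp add: dirac_sum_def nn_integral_distr nn_integral_point_measure_finite)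

lemma emeasure_dirac_sum:
  assumes "finite I" "A \<in> sets borel"
  shows "emeasure (dirac_sum I w q) A = (\<Sum>i\<in>I. ennreal (w i) * indicator A (ennreal (q i)))"
  using assms by (simp add: nn_integral_dirac_sum flip: nn_integral_indicator)

lemma measure_of_dirac_sum:
  assumes "finite I"
  shows "measure_of UNIV (sets borel) (\<lambda>A. \<Sum>i\<in>I. ennreal (w i) * indicator A (ennreal (q i)))
    = dirac_sum I w q"
proof -
  have "measure_of UNIV (sets borel) (\<lambda>A. \<Sum>i\<in>I. ennreal (w i) * indicator A (ennreal (q i)))
      = measure_of UNIV (sets borel) (emeasure (dirac_sum I w q))"
    using assms by (intro measure_of_eq) (auto simp: emeasure_dirac_sum sets.sigma_sets_eq[of borel, simplified])
  then show ?thesis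
    using measure_of_of_measure[of "dirac_sum I w q"] by simp
qed

lemma prob_space_dirac_sum:
  assumes "finite I" "\<And>i. i \<in> I \<Longrightarrow> 0 \<le> w i" "sum w I = 1"
  shows "prob_space (dirac_sum I w q)"
  using assms by (intro prob_spaceI) (simp add: emeasure_dirac_sum sum_ennreal)

lemma density_dirac_sum:
  assumes "finite I" "h \<in> borel_measurable borel"
    and "\<And>i. i \<in> I \<Longrightarrow> 0 \<le> w i" "\<And>i. i \<in> I \<Longrightarrow> 0 \<le> v i"
    and "\<And>i. i \<in> I \<Longrightarrow> h (ennreal (q i)) = ennreal (v i)"
  shows "density (dirac_sum I w q) h = dirac_sum I (\<lambda>i. w i * v i) q"
proof (rule measure_eqI)
  fix A assume "A \<in> sets (density (dirac_sum I w q) h)"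
  then have A: "A \<in> sets borel" by simp
  have "emeasure (density (dirac_sum I w q) h) A = (\<integral>\<^sup>+x. h x * indicator A x \<partial>dirac_sum I w q)"
    using assms(2) A by (simp add: emeasure_density)
  also have "\<dots> = (\<Sum>i\<in>I. ennreal (w i * v i) * indicator A (ennreal (q i)))"
    using assms A by (simp add: nn_integral_dirac_sum ennreal_mult mult.assoc)
  also have "\<dots> = emeasure (dirac_sum I (\<lambda>i. w i * v i) q) A"
    using assms(1) A by (simp add: emeasure_dirac_sum)
  finally show "emeasure (density (dirac_sum I w q) h) A = emeasure (dirac_sum I (\<lambda>i. w i * v i) q) A" .
qed simp

section \<open>The empirical measures\<close>

(* The remainder tbar m t is stored at index 0, so that the pieces of [0, t] are indexed
   by {0..<ell m t}. *)
definition piece :: "(nat \<Rightarrow> real) \<Rightarrow> real \<Rightarrow> nat \<Rightarrow> real" where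
  "piece m t i = (if i = 0 then tbar m t else m i)"

context
  fixes m :: "nat \<Rightarrow> real"
  assumes pos: "\<And>k. k \<ge> 1 \<Longrightarrow> m k > 0"
    and div: "filterlim (Mpart m) at_top sequentially"
begin

lemma
  assumes "0 < t"
  shows ell_ge_1: "1 \<le> ell m t"
    and Mpart_pred_ell_less: "Mpart m (ell m t - 1) < t"
proof -
  have "\<exists>l. t \<le> Mpart m l"
    using div unfolding filterlim_at_top eventually_sequentially by blast
  then have "t \<le> Mpart m (ell m t)"
    unfolding ell_def by (rule LeastI_ex)
  then show "1 \<le> ell m t"
    using assms by (cases "ell m t") (auto simp: Mpart_def)
  then have "ell m t - 1 < ell m t" by simp
  then have "\<not> t \<le> Mpart m (ell m t - 1)"
    unfolding ell_def by (rule not_less_Least)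
  then show "Mpart m (ell m t - 1) < t" by simp
qed

lemma piece_pos: "0 < t \<Longrightarrow> 0 < piece m t i"
  using Mpart_pred_ell_less[of t] pos[of i] by (auto simp: piece_def tbar_def)

lemma sum_pieces:
  assumes "0 < t"
  shows "(\<Sum>i\<in>{0..<ell m t}. h (piece m t i)) = h (tbar m t) + (\<Sum>k\<in>{1..<ell m t}. h (m k))"
  using ell_ge_1[OF assms] by (simp add: sum.atLeast_Suc_lessThan piece_def)

lemma sum_piece:
  assumes "0 < t"
  shows "(\<Sum>i\<in>{0..<ell m t}. piece m t i) = t"
proof -
  have "Mpart m (ell m t - 1) = (\<Sum>k\<in>{1..<ell m t}. m k)"
    unfolding Mpart_def using ell_ge_1[OF assms] by (intro sum.cong) auto
  then show ?thesis
    using sum_pieces[OF assms, of id] by (simp add: tbar_def)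
qed

lemma emp_mass_eq_dirac_sum:
  assumes "0 < t"
  shows "emp_mass m t = dirac_sum {0..<ell m t} (\<lambda>i. piece m t i / t) (piece m t)"
proof -
  have "emp_mass m t = measure_of UNIV (sets borel)
      (\<lambda>A. \<Sum>i\<in>{0..<ell m t}. ennreal (piece m t i / t) * indicator A (ennreal (piece m t i)))"
    unfolding emp_mass_def by (intro arg_cong[where f = "measure_of _ _"] ext sum_pieces[OF assms, symmetric])
  then show ?thesis by (simp only: measure_of_dirac_sum finite_atLeastLessThan)
qed

lemma emp_freq_eq_dirac_sum:
  assumes "0 < t"
  shows "emp_freq m t = dirac_sum {0..<ell m t} (\<lambda>i. 1 / real (ell m t)) (piece m t)"
proof -
  have "emp_freq m t = measure_of UNIV (sets borel)
      (\<lambda>A. \<Sum>i\<in>{0..<ell m t}. ennreal (1 / real (ell m t)) * indicator A (ennreal (piece m t i)))"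
    unfolding emp_freq_def by (intro arg_cong[where f = "measure_of _ _"] ext sum_pieces[OF assms, symmetric])
  then show ?thesis by (simp only: measure_of_dirac_sum finite_atLeastLessThan)
qed

lemma prob_space_emp_mass: "0 < t \<Longrightarrow> prob_space (emp_mass m t)"
  unfolding emp_mass_eq_dirac_sum
  by (rule prob_space_dirac_sum) (auto simp: piece_pos less_imp_le sum_piece simp flip: sum_divide_distrib)

lemma prob_space_emp_freq: "0 < t \<Longrightarrow> prob_space (emp_freq m t)"
  unfolding emp_freq_eq_dirac_sum using ell_ge_1[of t] by (intro prob_space_dirac_sum) auto

lemma emp_mass_eq_density_emp_freq:
  assumes "0 < t"
  shows "emp_mass m t = density (emp_freq m t) (\<lambda>x. ennreal (real (ell m t) / t) * x)"
proof -
  have "density (emp_freq m t) (\<lambda>x. ennreal (real (ell m t) / t) * x)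
      = dirac_sum {0..<ell m t} (\<lambda>i. 1 / real (ell m t) * (real (ell m t) / t * piece m t i)) (piece m t)"
    unfolding emp_freq_eq_dirac_sum[OF assms] using assms piece_pos[OF assms]
    by (intro density_dirac_sum) (auto simp: less_imp_le simp flip: ennreal_mult)
  also have "(\<lambda>i. 1 / real (ell m t) * (real (ell m t) / t * piece m t i)) = (\<lambda>i. piece m t i / t)"
    using ell_ge_1[OF assms] by auto
  finally show ?thesis by (simp add: emp_mass_eq_dirac_sum[OF assms])
qed

lemma emp_freq_eq_density_emp_mass:
  assumes "0 < t"
  shows "emp_freq m t = density (emp_mass m t) (\<lambda>x. ennreal (t / real (ell m t)) * inverse x)"
proof -
  have "density (emp_mass m t) (\<lambda>x. ennreal (t / real (ell m t)) * inverse x)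
      = dirac_sum {0..<ell m t} (\<lambda>i. piece m t i / t * (t / real (ell m t) * inverse (piece m t i))) (piece m t)"
    unfolding emp_mass_eq_dirac_sum[OF assms] using assms piece_pos[OF assms]
    by (intro density_dirac_sum) (auto simp: inverse_ennreal less_imp_le simp flip: ennreal_mult)
  also have "(\<lambda>i. piece m t i / t * (t / real (ell m t) * inverse (piece m t i))) = (\<lambda>i. 1 / real (ell m t))"
    using assms piece_pos[OF assms, THEN less_imp_neq, THEN not_sym] by (auto simp: field_simps)
  finally show ?thesis by (simp add: emp_freq_eq_dirac_sum[OF assms])
qed

lemma nn_integral_emp_freq_id:
  assumes "0 < t"
  shows "(\<integral>\<^sup>+x. x \<partial>emp_freq m t) = ennreal (t / real (ell m t))"
proof -
  have "(\<integral>\<^sup>+x. x \<partial>emp_freq m t) = (\<Sum>i\<in>{0..<ell m t}. ennreal (piece m t i / real (ell m t)))"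
    using piece_pos[OF assms] by (simp add: emp_freq_eq_dirac_sum[OF assms] nn_integral_dirac_sum
        ennreal_mult[symmetric] less_imp_le)
  also have "\<dots> = ennreal (t / real (ell m t))"
    using piece_pos[OF assms] sum_piece[OF assms] by (simp add: sum_ennreal less_imp_le flip: sum_divide_distrib)
  finally show ?thesis .
qed

lemma nn_integral_emp_mass_inverse:
  assumes "0 < t"
  shows "(\<integral>\<^sup>+x. inverse x \<partial>emp_mass m t) = ennreal (real (ell m t) / t)"
proof -
  have "(\<integral>\<^sup>+x. inverse x \<partial>emp_mass m t) = (\<Sum>i\<in>{0..<ell m t}. ennreal (1 / t))"
    using assms piece_pos[OF assms] by (simp add: emp_mass_eq_dirac_sum[OF assms] nn_integral_dirac_sum
        inverse_ennreal less_imp_le less_imp_neq[symmetric] flip: ennreal_mult)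
  also have "\<dots> = ennreal (real (ell m t) / t)"
    using assms by (simp add: ennreal_of_nat_eq_real_of_nat ennreal_mult[symmetric])
  finally show ?thesis .
qed

lemma ell_ratio_tendsto_of_emp_freq_moment:
  assumes "((\<lambda>t. \<integral>\<^sup>+x. x \<partial>emp_freq m t) \<longlongrightarrow> c) at_top"
  shows "((\<lambda>t. ennreal (real (ell m t) / t)) \<longlongrightarrow> inverse c) at_top"
proof -
  have "((\<lambda>t. inverse (\<integral>\<^sup>+x. x \<partial>emp_freq m t)) \<longlongrightarrow> inverse c) at_top"
    using continuous_on_tendsto_compose[OF continuous_on_inverse_ennreal[OF continuous_on_id, of UNIV] assms]
    by simp
  moreover have "\<forall>\<^sub>F t in at_top. inverse (\<integral>\<^sup>+x. x \<partial>emp_freq m t) = ennreal (real (ell m t) / t)"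
    using eventually_gt_at_top[of 0]
  proof eventually_elim
    case (elim t)
    then have "0 < t / real (ell m t)"
      using ell_ge_1[OF elim] by simp
    then show ?case
      by (simp add: nn_integral_emp_freq_id[OF elim] inverse_ennreal)
  qed
  ultimately show ?thesis
    by (rule Lim_transform_eventually)
qed

lemma ell_ratio_tendsto_of_emp_mass_moment:
  assumes "((\<lambda>t. \<integral>\<^sup>+x. inverse x \<partial>emp_mass m t) \<longlongrightarrow> c) at_top"
  shows "((\<lambda>t. ennreal (real (ell m t) / t)) \<longlongrightarrow> c) at_top"
  using assms eventually_mono[OF eventually_gt_at_top[of 0] nn_integral_emp_mass_inverse]
  by (rule Lim_transform_eventually)

lemma emp_mass_weak_conv_if_L1_conv:
  assumes lim: "((\<lambda>t. ennreal (real (ell m t) / t)) \<longlongrightarrow> A) at_top"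
    and Fs: "finite_measure Fs" "sets Fs = sets borel" "L1_conv (emp_freq m) Fs" "Fs \<noteq> return borel 0"
  shows "0 < A \<and> A < \<infinity> \<and> weak_conv_inf (emp_mass m) (density Fs (\<lambda>x. A * x))"
proof -
  have t_pos: "\<forall>\<^sub>F t in at_top. (0::real) < t"
    by (rule eventually_gt_at_top)
  from Fs(3) have weak: "weak_conv_inf (emp_freq m) Fs"
    and moment: "((\<lambda>t. \<integral>\<^sup>+x. x \<partial>emp_freq m t) \<longlongrightarrow> (\<integral>\<^sup>+x. x \<partial>Fs)) at_top"
    and moment_fin: "(\<integral>\<^sup>+x. x \<partial>Fs) < \<infinity>"
    unfolding L1_conv_def by auto
  have prob: "prob_space Fs"
    by (rule prob_space_weak_limit[OF eventually_mono[OF t_pos prob_space_emp_freq] weak Fs(1)])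
  have "(\<integral>\<^sup>+x. x \<partial>Fs) \<noteq> 0"
    by (rule nn_integral_nonzero_if_not_return[OF prob Fs(2) _ _ Fs(4)]) simp_all
  have A: "A = inverse (\<integral>\<^sup>+x. x \<partial>Fs)"
    using tendsto_unique[OF _ lim ell_ratio_tendsto_of_emp_freq_moment[OF moment]] by simp
  then have "0 < A" "A < \<infinity>"
    using \<open>(\<integral>\<^sup>+x. x \<partial>Fs) \<noteq> 0\<close> moment_fin by (simp_all add: ennreal_inverse_positive less_top[symmetric])
  then obtain a where a: "A = ennreal a" "0 < a"
    by (cases A rule: ennreal_cases) auto
  have ratio: "((\<lambda>t. real (ell m t) / t) \<longlongrightarrow> a) at_top"
    using a(2) by (intro tendsto_ennrealD[OF lim[unfolded a(1)] eventually_mono[OF t_pos]]) simp_all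
  have "weak_conv_inf (emp_mass m) (density Fs (\<lambda>x. ennreal a * x))"
    by (rule weak_conv_inf_density[OF _ Fs(2) weak continuous_on_id moment moment_fin ratio])
      (auto intro: eventually_mono[OF t_pos] simp: emp_mass_eq_density_emp_freq emp_freq_eq_dirac_sum)
  then show ?thesis
    using a \<open>0 < A\<close> \<open>A < \<infinity>\<close> by simp
qed

lemma emp_freq_weak_conv_if_wplus_conv:
  assumes lim: "((\<lambda>t. ennreal (real (ell m t) / t)) \<longlongrightarrow> A) at_top"
    and \<mu>s: "finite_measure \<mu>s" "sets \<mu>s = sets borel" "wplus_conv (emp_mass m) \<mu>s" "\<mu>s \<noteq> return borel \<infinity>"
  shows "0 < A \<and> A < \<infinity> \<and> weak_conv_inf (emp_freq m) (density \<mu>s (\<lambda>x. inverse A * inverse x))"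
proof -
  have t_pos: "\<forall>\<^sub>F t in at_top. (0::real) < t"
    by (rule eventually_gt_at_top)
  from \<mu>s(3) have weak: "weak_conv_inf (emp_mass m) \<mu>s"
    and moment: "((\<lambda>t. \<integral>\<^sup>+x. inverse x \<partial>emp_mass m t) \<longlongrightarrow> (\<integral>\<^sup>+x. inverse x \<partial>\<mu>s)) at_top"
    and moment_fin: "(\<integral>\<^sup>+x. inverse x \<partial>\<mu>s) < \<infinity>"
    unfolding wplus_conv_def by auto
  have prob: "prob_space \<mu>s"
    by (rule prob_space_weak_limit[OF eventually_mono[OF t_pos prob_space_emp_mass] weak \<mu>s(1)])
  have "(\<integral>\<^sup>+x. inverse x \<partial>\<mu>s) \<noteq> 0"
    by (rule nn_integral_nonzero_if_not_return[OF prob \<mu>s(2) _ _ \<mu>s(4)]) simp_all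
  have A: "A = (\<integral>\<^sup>+x. inverse x \<partial>\<mu>s)"
    using tendsto_unique[OF _ lim ell_ratio_tendsto_of_emp_mass_moment[OF moment]] by simp
  then have "0 < A" "A < \<infinity>"
    using \<open>(\<integral>\<^sup>+x. inverse x \<partial>\<mu>s) \<noteq> 0\<close> moment_fin by (simp_all add: zero_less_iff_neq_zero)
  then obtain a where a: "A = ennreal a" "0 < a"
    by (cases A rule: ennreal_cases) auto
  have "((\<lambda>t. real (ell m t) / t) \<longlongrightarrow> a) at_top"
    using a(2) by (intro tendsto_ennrealD[OF lim[unfolded a(1)] eventually_mono[OF t_pos]]) simp_all
  then have ratio: "((\<lambda>t. t / real (ell m t)) \<longlongrightarrow> inverse a) at_top"
    using tendsto_inverse[of "\<lambda>t. real (ell m t) / t" a] a by simp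
  have "weak_conv_inf (emp_freq m) (density \<mu>s (\<lambda>x. ennreal (inverse a) * inverse x))"
    by (rule weak_conv_inf_density[OF _ \<mu>s(2) weak continuous_on_inverse_ennreal[OF continuous_on_id] moment moment_fin ratio])
      (auto intro: eventually_mono[OF t_pos] simp: emp_freq_eq_density_emp_mass emp_mass_eq_dirac_sum)
  then show ?thesis
    using a \<open>0 < A\<close> \<open>A < \<infinity>\<close> by (simp add: inverse_ennreal)
qed

end

theorem proposition3p3:
  fixes m :: "nat \<Rightarrow> real" and A :: ennreal
  assumes pos: "\<And>k. k \<ge> 1 \<Longrightarrow> m k > 0"
    and div: "filterlim (Mpart m) at_top sequentially"
    and lim: "((\<lambda>t. ennreal (real (ell m t) / t)) \<longlongrightarrow> A) at_top"
  shows
    "(\<forall>Fs. finite_measure Fs \<and> sets Fs = sets borel \<and>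
          L1_conv (emp_freq m) Fs \<and> Fs \<noteq> return borel 0 \<longrightarrow>
        0 < A \<and> A < \<infinity> \<and> weak_conv_inf (emp_mass m) (density Fs (\<lambda>x. A * x)))
   \<and> (\<forall>\<mu>s. finite_measure \<mu>s \<and> sets \<mu>s = sets borel \<and>
          wplus_conv (emp_mass m) \<mu>s \<and> \<mu>s \<noteq> return borel \<infinity> \<longrightarrow>
        0 < A \<and> A < \<infinity> \<and> weak_conv_inf (emp_freq m) (density \<mu>s (\<lambda>x. inverse A * inverse x)))"
  using emp_mass_weak_conv_if_L1_conv[OF pos div lim] emp_freq_weak_conv_if_wplus_conv[OF pos div lim]
  by blast

end
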